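(* Let $t \geq 1$ and $p \geq 1$ be integers, let $\mathcal{F}$ be a finite family of finite sets, and let $\mathcal{L}$ be a largest $t$-intersecting sub-family of $\mathcal{F}$. Suppose that the maximum of $\prod_{i=1}^p |\mathcal{B}_i|$ over all $p$-tuples $(\mathcal{B}_1, \dots, \mathcal{B}_p)$ of cross-$t$-intersecting sub-families of $\mathcal{F}$ is attained when $\mathcal{B}_1 = \dots = \mathcal{B}_p = \mathcal{L}$. Then for any integer $k \geq p$, the maximum of $\prod_{i=1}^k |\mathcal{A}_i|$ over all $k$-tuples $(\mathcal{A}_1, \dots, \mathcal{A}_k)$ of cross-$t$-intersecting sub-families of $\mathcal{F}$ is attained when $\mathcal{A}_1 = \dots = \mathcal{A}_k = \mathcal{L}$.
   Context: A family $\mathcal{A}$ is $t$-intersecting if $|A \cap B| \geq t$ for all $A, B \in \mathcal{A}$ with $A \neq B$. Families $\mathcal{A}_1, \dots, \mathcal{A}_k$ (not necessarily distinct or non-empty) are cross-$t$-intersecting if for all $i \neq j$, $|A \cap B| \geq t$ for every $A \in \mathcal{A}_i$, $B \in \mathcal{A}_j$. *)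

theory Defs
  imports Main
begin

definition t_intersecting :: "nat \<Rightarrow> 'a set set \<Rightarrow> bool" where
  "t_intersecting t \<A> \<longleftrightarrow> (\<forall>A\<in>\<A>. \<forall>B\<in>\<A>. A \<noteq> B \<longrightarrow> t \<le> card (A \<inter> B))"

text \<open>A k-tuple of families is represented by a function on indices 0..k-1.\<close>
definition cross_t_intersecting :: "nat \<Rightarrow> nat \<Rightarrow> (nat \<Rightarrow> 'a set set) \<Rightarrow> bool" where
  "cross_t_intersecting t k \<A> \<longleftrightarrow>
     (\<forall>i<k. \<forall>j<k. i \<noteq> j \<longrightarrow> (\<forall>A\<in>\<A> i. \<forall>B\<in>\<A> j. t \<le> card (A \<inter> B)))"

definition largest_t_intersecting :: "nat \<Rightarrow> 'a set set \<Rightarrow> 'a set set \<Rightarrow> bool" where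
  "largest_t_intersecting t \<F> \<L> \<longleftrightarrow>
     \<L> \<subseteq> \<F> \<and> t_intersecting t \<L> \<and>
     (\<forall>\<L>'. \<L>' \<subseteq> \<F> \<and> t_intersecting t \<L>' \<longrightarrow> card \<L>' \<le> card \<L>)"

text \<open>Upper bound: the product of sizes over k-tuples of cross-t-intersecting
  sub-families of F never exceeds |L|^k (the value at the constant tuple).\<close>
definition max_attained_at_const :: "nat \<Rightarrow> nat \<Rightarrow> 'a set set \<Rightarrow> 'a set set \<Rightarrow> bool" where
  "max_attained_at_const t k \<F> \<L> \<longleftrightarrow>
     (\<forall>\<A>. (\<forall>i<k. \<A> i \<subseteq> \<F>) \<and> cross_t_intersecting t k \<A> \<longrightarrow>
        (\<Prod>i<k. card (\<A> i)) \<le> card \<L> ^ k)"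

end

theory Submission
  imports Defs
begin

text \<open>Deleting any one family from a cross-$t$-intersecting $(k+1)$-tuple leaves a
  cross-$t$-intersecting $k$-tuple, whose product is at most $|\mathcal L|^k$ by hypothesis.
  Every index is missed by exactly one of these $k+1$ deletions, so multiplying the bounds gives
  $\left(\prod_i |\mathcal A_i|\right)^k \le |\mathcal L|^{k(k+1)}$, and taking $k$-th roots
  yields the bound for $k+1$. Induction from $p$ finishes.\<close>

lemma prod_le_power_if_prod_remove_le:
  fixes c :: "'i \<Rightarrow> 'b::linordered_semidom"
  assumes "finite I" and "card I \<ge> 2"
    and c_nonneg: "\<And>i. i \<in> I \<Longrightarrow> 0 \<le> c i" and "0 \<le> M"
    and remove_le: "\<And>j. j \<in> I \<Longrightarrow> (\<Prod>i\<in>I - {j}. c i) \<le> M ^ (card I - 1)"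
  shows "(\<Prod>i\<in>I. c i) \<le> M ^ card I"
proof -
  define n where "n = card I"
  define P where "P = (\<Prod>i\<in>I. c i)"
  have "P \<ge> 0" unfolding P_def using c_nonneg by (simp add: prod_nonneg)
  show ?thesis
  proof (cases "P = 0")
    case True
    then show ?thesis using \<open>0 \<le> M\<close> by (simp add: P_def)
  next
    case False
    with \<open>P \<ge> 0\<close> have "P > 0" by simp
    have remove: "(\<Prod>i\<in>I - {j}. c i) * c j = P" if "j \<in> I" for j
      unfolding P_def using prod.remove[OF \<open>finite I\<close> that, of c] by (simp add: mult.commute)
    have "n = Suc (n - 1)" using \<open>card I \<ge> 2\<close> by (simp add: n_def)
    then have "P ^ (n - 1) * P = (\<Prod>j\<in>I. P)"
      by (metis n_def power_Suc2 prod_constant)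
    also have "\<dots> = (\<Prod>j\<in>I. (\<Prod>i\<in>I - {j}. c i) * c j)"
      using remove by simp
    also have "\<dots> = (\<Prod>j\<in>I. \<Prod>i\<in>I - {j}. c i) * P"
      by (simp only: P_def prod.distrib)
    also have "\<dots> \<le> (\<Prod>j\<in>I. M ^ (n - 1)) * P"
      using remove_le c_nonneg \<open>P \<ge> 0\<close>
      by (intro mult_right_mono prod_mono) (auto simp: n_def intro!: prod_nonneg)
    also have "\<dots> = (M ^ n) ^ (n - 1) * P"
      by (simp add: n_def power_mult[symmetric] mult.commute)
    finally have "P ^ (n - 1) \<le> (M ^ n) ^ (n - 1)"
      using \<open>P > 0\<close> by (rule mult_right_le_imp_le)
    moreover have "n - 1 = Suc (n - 2)" using \<open>card I \<ge> 2\<close> by (simp add: n_def)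
    ultimately have "P \<le> M ^ n"
      using \<open>0 \<le> M\<close> by (metis power_le_imp_le_base zero_le_power)
    then show ?thesis by (simp add: P_def n_def)
  qed
qed

definition skip :: "nat \<Rightarrow> nat \<Rightarrow> nat" where
  "skip j i = (if i < j then i else Suc i)"

lemma inj_skip: "inj (skip j)"
  by (auto simp: inj_def skip_def split: if_splits)

lemma skip_image_lessThan:
  assumes "j < Suc k"
  shows "skip j ` {..<k} = {..<Suc k} - {j}"
proof
  show "skip j ` {..<k} \<subseteq> {..<Suc k} - {j}"
    by (auto simp: skip_def)
next
  show "{..<Suc k} - {j} \<subseteq> skip j ` {..<k}"
  proof
    fix x assume x: "x \<in> {..<Suc k} - {j}"
    show "x \<in> skip j ` {..<k}"
    proof (cases "x < j")
      case True
      then show ?thesis using x assms by (auto simp: skip_def intro!: image_eqI[where x = x])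
    next
      case False
      with x obtain y where "x = Suc y" "j \<le> y" by (cases x) auto
      then show ?thesis using x by (auto simp: skip_def intro!: image_eqI[where x = y])
    qed
  qed
qed

lemma prod_skip_lessThan:
  assumes "j < Suc k"
  shows "(\<Prod>i<k. f (skip j i)) = (\<Prod>i\<in>{..<Suc k} - {j}. f i)"
proof -
  have "(\<Prod>i<k. f (skip j i)) = (\<Prod>i\<in>skip j ` {..<k}. f i)"
    using prod.reindex[OF inj_on_subset[OF inj_skip subset_UNIV], of f] by simp
  then show ?thesis by (simp only: skip_image_lessThan[OF assms])
qed

lemma cross_t_intersecting_skip:
  assumes "cross_t_intersecting t (Suc k) \<A>" and "j < Suc k"
  shows "cross_t_intersecting t k (\<A> \<circ> skip j)"
  unfolding cross_t_intersecting_def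
proof (intro allI impI ballI)
  fix i i' A B
  assume "i < k" "i' < k" "i \<noteq> i'" "A \<in> (\<A> \<circ> skip j) i" "B \<in> (\<A> \<circ> skip j) i'"
  moreover have "skip j i < Suc k" "skip j i' < Suc k"
    using \<open>i < k\<close> \<open>i' < k\<close> by (auto simp: skip_def)
  moreover have "skip j i \<noteq> skip j i'"
    using \<open>i \<noteq> i'\<close> inj_skip[of j] by (auto dest: injD)
  ultimately show "t \<le> card (A \<inter> B)"
    using assms(1) unfolding cross_t_intersecting_def by auto
qed

lemma max_attained_at_const_Suc:
  assumes "k \<ge> 1" and max_k: "max_attained_at_const t k \<F> \<L>"
  shows "max_attained_at_const t (Suc k) \<F> \<L>"
  unfolding max_attained_at_const_def
proof (intro allI impI, elim conjE)
  fix \<A> assume sub: "\<forall>i<Suc k. \<A> i \<subseteq> \<F>" and cross: "cross_t_intersecting t (Suc k) \<A>"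
  have remove_le: "(\<Prod>i\<in>{..<Suc k} - {j}. card (\<A> i)) \<le> card \<L> ^ k" if "j < Suc k" for j
  proof -
    have "\<forall>i<k. (\<A> \<circ> skip j) i \<subseteq> \<F>"
      using sub by (auto simp: skip_def)
    with max_k cross_t_intersecting_skip[OF cross that]
    have "(\<Prod>i<k. card ((\<A> \<circ> skip j) i)) \<le> card \<L> ^ k"
      unfolding max_attained_at_const_def by blast
    then show ?thesis using prod_skip_lessThan[OF that, of "\<lambda>i. card (\<A> i)"] by simp
  qed
  show "(\<Prod>i<Suc k. card (\<A> i)) \<le> card \<L> ^ Suc k"
    using prod_le_power_if_prod_remove_le[of "{..<Suc k}" "\<lambda>i. card (\<A> i)" "card \<L>"]
      remove_le \<open>k \<ge> 1\<close> by simp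
qed

theorem lemma5p1:
  fixes t p k :: nat and \<F> \<L> :: "'a set set"
  assumes "t \<ge> 1" and "p \<ge> 1"
    and "finite \<F>" and "\<forall>F\<in>\<F>. finite F"
    and "largest_t_intersecting t \<F> \<L>"
    and "max_attained_at_const t p \<F> \<L>"
    and "k \<ge> p"
  shows "max_attained_at_const t k \<F> \<L>"
  using \<open>k \<ge> p\<close>
proof (induction k rule: dec_induct)
  case base
  show ?case using \<open>max_attained_at_const t p \<F> \<L>\<close> .
next
  case (step n)
  with \<open>p \<ge> 1\<close> show ?case by (intro max_attained_at_const_Suc) simp_all
qed

end
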